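(* Let $(G,\cdot,\curlywedge,\xi,\delta)$ satisfy the standing assumptions below. For every subset $H\subseteq G$, every natural number $n>1$ and every $z\in G$, we have $z\in F_\xi^{\,n}(H)$ if and only if there exist $x_i,y_i,t_i\in G^*$ and $u_i,v_i\in G$ ($1\le i\le 2^n-1$) such that: (a) $u_1\downarrow v_1$ and $(u_1\curlywedge v_1)x_1\boxdot y_1\leqslant zt_1$; (b) for every $i$ with $1\le i\le 2^{n-1}-1$: $u_{2i}\downarrow v_{2i}$, $(u_{2i}\curlywedge v_{2i})x_{2i}\boxdot y_{2i}\leqslant u_it_{2i}$, $u_{2i+1}\downarrow v_{2i+1}$ and $(u_{2i+1}\curlywedge v_{2i+1})x_{2i+1}\boxdot y_{2i+1}\leqslant v_ix_it_{2i+1}$; (c) for every $i$ with $2^{n-1}\le i\le 2^n-1$: $u_i\in H$ and $v_ix_i\in H$.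
   Context: Standing assumptions: $(G,\cdot)$ is a semigroup, $(G,\curlywedge)$ a semilattice on $G$, $\xi,\delta\subseteq G\times G$. Write $x\leqslant y$ iff $x\curlywedge y=x$ (semilattice order $\zeta$), $x\downarrow y$ iff $(x,y)\in\xi$, $x\vdash y$ iff $(x,y)\in\delta$. Assume $\xi$ is left regular ($(u,v)\in\xi\Rightarrow(xu,xv)\in\xi$), $\zeta\subseteq\xi$, $\delta$ is a left ideal ($(x,y)\in\delta\Rightarrow(ux,y)\in\delta$), and for all $x,y,z,u,v\in G$: $x(y\curlywedge z)=xy\curlywedge xz$; $x\leqslant y\wedge u\leqslant v\wedge y\downarrow v\Rightarrow u\downarrow x$; $x\downarrow y\Rightarrow(x\curlywedge y)u=xu\curlywedge yu$. $G^*=G\cup\{e\}$ is $(G,\cdot)$ with a new identity $e$ adjoined, with conventions $e\leqslant e$, $e\vdash e$, $x\vdash e$ for all $x\in G$. $a\boxdot b\leqslant c$ abbreviates $a\vdash b\wedge ab\leqslant c$. For $H\subseteq G$, $F_\xi(H)=\{z\in G:\exists u,v\in G,\ \exists x,y,t\in G^*$ with $u\downarrow v$, $(u\curlywedge v)x\boxdot y\leqslant zt$, $u\in H$, $vx\in H\}$; $F_\xi^{\,0}(H)=H$ and $F_\xi^{\,n}(H)=F_\xi(F_\xi^{\,n-1}(H))$ for $n\ge1$. *)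

theory Defs
  imports Main
begin

text \<open>G is modelled by a type 'a; G* = G \<union> {e} by 'a option, with None playing e.\<close>

fun mults :: "('a \<Rightarrow> 'a \<Rightarrow> 'a) \<Rightarrow> 'a option \<Rightarrow> 'a option \<Rightarrow> 'a option" where
  "mults m None y = y"
| "mults m (Some a) None = Some a"
| "mults m (Some a) (Some b) = Some (m a b)"

fun les :: "('a \<Rightarrow> 'a \<Rightarrow> 'a) \<Rightarrow> 'a option \<Rightarrow> 'a option \<Rightarrow> bool" where
  "les w (Some a) (Some b) = (w a b = a)"
| "les w None None = True"
| "les w _ _ = False"

fun vds :: "('a \<times> 'a) set \<Rightarrow> 'a option \<Rightarrow> 'a option \<Rightarrow> bool" where
  "vds d _ None = True"
| "vds d (Some a) (Some b) = ((a, b) \<in> d)"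
| "vds d None (Some b) = False"

text \<open>a \<boxdot> b \<le> c  abbreviates  a |- b and ab \<le> c.\<close>
definition boxle :: "('a \<Rightarrow> 'a \<Rightarrow> 'a) \<Rightarrow> ('a \<Rightarrow> 'a \<Rightarrow> 'a) \<Rightarrow> ('a \<times> 'a) set
    \<Rightarrow> 'a option \<Rightarrow> 'a option \<Rightarrow> 'a option \<Rightarrow> bool" where
  "boxle m w d a b c \<longleftrightarrow> vds d a b \<and> les w (mults m a b) c"

definition Fxi :: "('a \<Rightarrow> 'a \<Rightarrow> 'a) \<Rightarrow> ('a \<Rightarrow> 'a \<Rightarrow> 'a) \<Rightarrow> ('a \<times> 'a) set \<Rightarrow> ('a \<times> 'a) set
    \<Rightarrow> 'a set \<Rightarrow> 'a set" where
  "Fxi m w xi d H = {z. \<exists>u v x y t. (u, v) \<in> xi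
      \<and> boxle m w d (mults m (Some (w u v)) x) y (mults m (Some z) t)
      \<and> u \<in> H \<and> mults m (Some v) x \<in> Some ` H}"

end

theory Submission
  imports Defs
begin

text \<open>Unfolding \<open>F\<^sub>\<xi>\<close> \<open>n\<close> times produces a binary tree of witnesses, numbered heap-style: node \<open>j\<close>
  has children \<open>2j\<close> and \<open>2j+1\<close>, the root \<open>1\<close> is witnessed against \<open>z\<close>, and the children of \<open>j\<close> are
  witnessed against the two elements \<open>u\<^sub>j\<close> and \<open>v\<^sub>jx\<^sub>j\<close> that node \<open>j\<close> requires to lie in the
  previous stage. Applying \<open>F\<^sub>\<xi>\<close> once more to \<open>H\<close> amounts to adding one layer of nodes below the
  leaves, so the characterisation follows by induction on \<open>n\<close>. It is pure bookkeeping: none of the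
  algebraic axioms is needed, and it holds for every \<open>n\<close>, not only \<open>n > 1\<close>.\<close>

definition Fxi_witness ::
    "('a \<Rightarrow> 'a \<Rightarrow> 'a) \<Rightarrow> ('a \<Rightarrow> 'a \<Rightarrow> 'a) \<Rightarrow> ('a \<times> 'a) set \<Rightarrow> ('a \<times> 'a) set
      \<Rightarrow> 'a option \<Rightarrow> 'a \<Rightarrow> 'a \<Rightarrow> 'a option \<Rightarrow> 'a option \<Rightarrow> 'a option \<Rightarrow> bool" where
  "Fxi_witness m w xi d c u v x y t \<longleftrightarrow>
    (u, v) \<in> xi \<and> boxle m w d (mults m (Some (w u v)) x) y (mults m c t)"

definition node_target ::
    "('a \<Rightarrow> 'a \<Rightarrow> 'a) \<Rightarrow> 'a \<Rightarrow> (nat \<Rightarrow> 'a) \<Rightarrow> (nat \<Rightarrow> 'a) \<Rightarrow> (nat \<Rightarrow> 'a option) \<Rightarrow> nat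
      \<Rightarrow> 'a option" where
  "node_target m z u v x j =
    (if j = 1 then Some z
     else if even j then Some (u (j div 2))
     else mults m (Some (v (j div 2))) (x (j div 2)))"

definition Fxi_tree ::
    "('a \<Rightarrow> 'a \<Rightarrow> 'a) \<Rightarrow> ('a \<Rightarrow> 'a \<Rightarrow> 'a) \<Rightarrow> ('a \<times> 'a) set \<Rightarrow> ('a \<times> 'a) set \<Rightarrow> nat
      \<Rightarrow> 'a set \<Rightarrow> 'a \<Rightarrow> (nat \<Rightarrow> 'a) \<Rightarrow> (nat \<Rightarrow> 'a) \<Rightarrow> (nat \<Rightarrow> 'a option)
      \<Rightarrow> (nat \<Rightarrow> 'a option) \<Rightarrow> (nat \<Rightarrow> 'a option) \<Rightarrow> bool" where
  "Fxi_tree m w xi d n H z u v x y t \<longleftrightarrow>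
    (\<forall>j. 1 \<le> j \<and> j < 2 ^ n \<longrightarrow>
       Fxi_witness m w xi d (node_target m z u v x j) (u j) (v j) (x j) (y j) (t j))
    \<and> (\<forall>j. 2 ^ n \<le> j \<and> j < 2 ^ Suc n \<longrightarrow> node_target m z u v x j \<in> Some ` H)"

lemma mults_Some_not_None: "mults m (Some a) x \<noteq> None"
  by (cases x) auto

lemma node_target_not_None: "node_target m z u v x j \<noteq> None"
  by (simp add: node_target_def mults_Some_not_None del: not_None_eq)

lemma node_target_even [simp]: "node_target m z u v x (2 * j) = Some (u j)"
  by (simp add: node_target_def)

lemma node_target_odd [simp]:
  "j \<ge> 1 \<Longrightarrow> node_target m z u v x (Suc (2 * j)) = mults m (Some (v j)) (x j)"
  by (simp add: node_target_def)

lemma node_target_cong: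
  assumes "j \<noteq> 1 \<Longrightarrow>
    u (j div 2) = u' (j div 2) \<and> v (j div 2) = v' (j div 2) \<and> x (j div 2) = x' (j div 2)"
  shows "node_target m z u v x j = node_target m z u' v' x' j"
  using assms by (simp add: node_target_def)

lemma option_mem_Fxi_iff:
  "c \<in> Some ` Fxi m w xi d H \<longleftrightarrow> c \<noteq> None \<and>
    (\<exists>u v x y t. Fxi_witness m w xi d c u v x y t \<and> u \<in> H \<and> mults m (Some v) x \<in> Some ` H)"
  by (cases c) (auto simp: Fxi_def Fxi_witness_def image_iff)

lemma all_children_iff:
  "(\<forall>j. 2 * M \<le> j \<and> j < 2 * N \<longrightarrow> P j) \<longleftrightarrow>
    (\<forall>i::nat. M \<le> i \<and> i < N \<longrightarrow> P (2 * i) \<and> P (2 * i + 1))"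
proof (intro iffI allI impI)
  fix j assume children: "\<forall>i. M \<le> i \<and> i < N \<longrightarrow> P (2 * i) \<and> P (2 * i + 1)"
    and j: "2 * M \<le> j \<and> j < 2 * N"
  have "M \<le> j div 2 \<and> j div 2 < N" using j by presburger
  then have "P (2 * (j div 2)) \<and> P (2 * (j div 2) + 1)" using children by blast
  moreover have "j = 2 * (j div 2) \<or> j = 2 * (j div 2) + 1" by presburger
  ultimately show "P j" by auto
qed auto

lemma Fxi_tree_shrink:
  assumes "Fxi_tree m w xi d (Suc n) H z u v x y t"
  shows "Fxi_tree m w xi d n (Fxi m w xi d H) z u v x y t"
proof -
  have nodes: "\<And>j. 1 \<le> j \<Longrightarrow> j < 2 ^ Suc n \<Longrightarrow>
      Fxi_witness m w xi d (node_target m z u v x j) (u j) (v j) (x j) (y j) (t j)"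
    and leaves: "\<And>j. 2 ^ Suc n \<le> j \<Longrightarrow> j < 2 ^ Suc (Suc n) \<Longrightarrow>
      node_target m z u v x j \<in> Some ` H"
    using assms by (auto simp: Fxi_tree_def)
  have "node_target m z u v x j \<in> Some ` Fxi m w xi d H"
    if j: "2 ^ n \<le> j \<and> j < 2 ^ Suc n" for j
  proof -
    have "(1::nat) \<le> 2 ^ n" by simp
    then have "1 \<le> j" using j by linarith
    moreover have "2 ^ Suc n \<le> 2 * j \<and> 2 * j + 1 < 2 ^ Suc (Suc n)" using j by simp
    ultimately have "u j \<in> H" "mults m (Some (v j)) (x j) \<in> Some ` H"
      using leaves[of "2 * j"] leaves[of "2 * j + 1"] by auto
    moreover have "Fxi_witness m w xi d (node_target m z u v x j) (u j) (v j) (x j) (y j) (t j)"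
      using nodes j \<open>1 \<le> j\<close> by blast
    ultimately show ?thesis
      unfolding option_mem_Fxi_iff using node_target_not_None by (intro conjI exI)
  qed
  then show ?thesis using nodes by (auto simp: Fxi_tree_def)
qed

definition graft :: "nat \<Rightarrow> (nat \<Rightarrow> 'b) \<Rightarrow> (nat \<Rightarrow> 'b) \<Rightarrow> nat \<Rightarrow> 'b" where
  "graft N f g j = (if j < N then f j else g j)"

lemma Fxi_tree_extend:
  assumes "Fxi_tree m w xi d n (Fxi m w xi d H) z u v x y t"
  shows "\<exists>u v x y t. Fxi_tree m w xi d (Suc n) H z u v x y t"
proof -
  let ?target = "node_target m z u v x"
  have "\<forall>j. \<exists>u v x y t. 2 ^ n \<le> j \<and> j < 2 ^ Suc n \<longrightarrow>
      Fxi_witness m w xi d (?target j) u v x y t \<and> u \<in> H \<and> mults m (Some v) x \<in> Some ` H"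
    using assms unfolding Fxi_tree_def option_mem_Fxi_iff by blast
  then obtain U V X Y T where leaf: "\<And>j. 2 ^ n \<le> j \<Longrightarrow> j < 2 ^ Suc n \<Longrightarrow>
      Fxi_witness m w xi d (?target j) (U j) (V j) (X j) (Y j) (T j)
      \<and> U j \<in> H \<and> mults m (Some (V j)) (X j) \<in> Some ` H"
    by metis
  let ?target' = "node_target m z (graft (2 ^ n) u U) (graft (2 ^ n) v V) (graft (2 ^ n) x X)"
  have same_target: "?target' j = ?target j" if "j < 2 ^ Suc n" for j
    by (rule node_target_cong) (use that in \<open>auto simp: graft_def\<close>)
  have "Fxi_tree m w xi d (Suc n) H z (graft (2 ^ n) u U) (graft (2 ^ n) v V) (graft (2 ^ n) x X)
      (graft (2 ^ n) y Y) (graft (2 ^ n) t T)"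
    unfolding Fxi_tree_def
  proof (intro conjI allI impI)
    fix j :: nat assume j: "1 \<le> j \<and> j < 2 ^ Suc n"
    show "Fxi_witness m w xi d (?target' j) (graft (2 ^ n) u U j) (graft (2 ^ n) v V j)
        (graft (2 ^ n) x X j) (graft (2 ^ n) y Y j) (graft (2 ^ n) t T j)"
    proof (cases "j < 2 ^ n")
      case True
      then show ?thesis using assms j same_target by (simp add: Fxi_tree_def graft_def)
    next
      case False
      then show ?thesis using leaf[of j] j same_target by (simp add: graft_def)
    qed
  next
    fix j :: nat assume j: "2 ^ Suc n \<le> j \<and> j < 2 ^ Suc (Suc n)"
    define i where "i = j div 2"
    have i: "2 ^ n \<le> i \<and> i < 2 ^ Suc n" using j unfolding i_def by auto
    moreover have "(1::nat) \<le> 2 ^ n" by simp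
    ultimately have "1 \<le> i" by linarith
    have "j = 2 * i \<or> j = 2 * i + 1" unfolding i_def by presburger
    then show "?target' j \<in> Some ` H"
      using leaf[of i] i \<open>1 \<le> i\<close> by (auto simp: graft_def)
  qed
  then show ?thesis by blast
qed

lemma Fxi_power_iff_tree:
  "z \<in> (Fxi m w xi d ^^ n) H \<longleftrightarrow> (\<exists>u v x y t. Fxi_tree m w xi d n H z u v x y t)"
proof (induction n arbitrary: H)
  case 0
  then show ?case by (auto simp: Fxi_tree_def node_target_def le_Suc_eq)
next
  case (Suc n)
  have "z \<in> (Fxi m w xi d ^^ Suc n) H \<longleftrightarrow> z \<in> (Fxi m w xi d ^^ n) (Fxi m w xi d H)"
    by (simp only: funpow_Suc_right comp_def)
  also have "\<dots> \<longleftrightarrow> (\<exists>u v x y t. Fxi_tree m w xi d n (Fxi m w xi d H) z u v x y t)"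
    by (rule Suc.IH)
  also have "\<dots> \<longleftrightarrow> (\<exists>u v x y t. Fxi_tree m w xi d (Suc n) H z u v x y t)"
    by (meson Fxi_tree_shrink Fxi_tree_extend)
  finally show ?case .
qed

lemma Fxi_tree_iff_parents:
  assumes "n \<ge> 1"
  shows "Fxi_tree m w xi d n H z u v x y t \<longleftrightarrow>
    Fxi_witness m w xi d (Some z) (u 1) (v 1) (x 1) (y 1) (t 1)
    \<and> (\<forall>i. 1 \<le> i \<and> i < 2 ^ (n - 1) \<longrightarrow>
          Fxi_witness m w xi d (Some (u i)) (u (2 * i)) (v (2 * i)) (x (2 * i)) (y (2 * i)) (t (2 * i))
        \<and> Fxi_witness m w xi d (mults m (Some (v i)) (x i))
            (u (2 * i + 1)) (v (2 * i + 1)) (x (2 * i + 1)) (y (2 * i + 1)) (t (2 * i + 1)))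
    \<and> (\<forall>i. 2 ^ (n - 1) \<le> i \<and> i < 2 ^ n \<longrightarrow> u i \<in> H \<and> mults m (Some (v i)) (x i) \<in> Some ` H)"
proof -
  have pow: "(2::nat) ^ n = 2 * 2 ^ (n - 1)"
    using assms by (metis Suc_diff_le diff_Suc_1 power_Suc)
  have "1 < (2::nat) ^ n" using assms by (intro one_less_power) auto
  then have root_and_rest: "(\<forall>j. 1 \<le> j \<and> j < 2 ^ n \<longrightarrow> P j) \<longleftrightarrow>
      P 1 \<and> (\<forall>j. 2 * 1 \<le> j \<and> j < 2 ^ n \<longrightarrow> P j)" for P :: "nat \<Rightarrow> bool"
    by (metis One_nat_def le_antisym not_less_eq_eq mult_1_right Suc_1 le_add1 plus_1_eq_Suc)
  show ?thesis
    unfolding Fxi_tree_def root_and_rest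
    unfolding power_Suc pow
    unfolding all_children_iff
    by (auto simp: node_target_def)
qed

theorem proposition6:
  fixes m :: "'a \<Rightarrow> 'a \<Rightarrow> 'a" and w :: "'a \<Rightarrow> 'a \<Rightarrow> 'a"
    and xi :: "('a \<times> 'a) set" and d :: "('a \<times> 'a) set"
  assumes m_assoc: "\<And>a b c. m (m a b) c = m a (m b c)"
    and w_assoc: "\<And>a b c. w (w a b) c = w a (w b c)"
    and w_comm: "\<And>a b. w a b = w b a"
    and w_idem: "\<And>a. w a a = a"
    and xi_leftreg: "\<And>u v x. (u, v) \<in> xi \<Longrightarrow> (m x u, m x v) \<in> xi"
    and zeta_xi: "\<And>x y. w x y = x \<Longrightarrow> (x, y) \<in> xi"
    and d_leftideal: "\<And>x y u. (x, y) \<in> d \<Longrightarrow> (m u x, y) \<in> d"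
    and distl: "\<And>x y z. m x (w y z) = w (m x y) (m x z)"
    and ax2: "\<And>x y u v. w x y = x \<Longrightarrow> w u v = u \<Longrightarrow> (y, v) \<in> xi \<Longrightarrow> (u, x) \<in> xi"
    and ax3: "\<And>x y u. (x, y) \<in> xi \<Longrightarrow> m (w x y) u = w (m x u) (m y u)"
    and n: "n > (1::nat)"
  shows "z \<in> (Fxi m w xi d ^^ n) H \<longleftrightarrow>
    (\<exists>(x::nat \<Rightarrow> 'a option) (y::nat \<Rightarrow> 'a option) (t::nat \<Rightarrow> 'a option)
       (u::nat \<Rightarrow> 'a) (v::nat \<Rightarrow> 'a).
      (u 1, v 1) \<in> xi
      \<and> boxle m w d (mults m (Some (w (u 1) (v 1))) (x 1)) (y 1) (mults m (Some z) (t 1))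
      \<and> (\<forall>i. 1 \<le> i \<and> i \<le> 2 ^ (n - 1) - 1 \<longrightarrow>
            (u (2*i), v (2*i)) \<in> xi
          \<and> boxle m w d (mults m (Some (w (u (2*i)) (v (2*i)))) (x (2*i))) (y (2*i))
                (mults m (Some (u i)) (t (2*i)))
          \<and> (u (2*i+1), v (2*i+1)) \<in> xi
          \<and> boxle m w d (mults m (Some (w (u (2*i+1)) (v (2*i+1)))) (x (2*i+1))) (y (2*i+1))
                (mults m (mults m (Some (v i)) (x i)) (t (2*i+1))))
      \<and> (\<forall>i. 2 ^ (n - 1) \<le> i \<and> i \<le> 2 ^ n - 1 \<longrightarrow>
            u i \<in> H \<and> mults m (Some (v i)) (x i) \<in> Some ` H))"
proof -
  have below_pow2: "i \<le> 2 ^ k - 1 \<longleftrightarrow> i < (2::nat) ^ k" for i k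
    by (metis One_nat_def Suc_pred le_simps(2) zero_less_power zero_less_numeral)
  have "1 \<le> n" using n by simp
  show ?thesis
    unfolding Fxi_power_iff_tree Fxi_tree_iff_parents[OF \<open>1 \<le> n\<close>] Fxi_witness_def below_pow2
    by blast
qed

end
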